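(* Let $X$ be a compact Hausdorff space, $\varphi:X\to X$ a continuous surjection, and $(\tilde X,\tilde\varphi)$ its minimal homeomorphism extension with extension map $p:\tilde X\to X$. Let $F\in C(X)\rtimes_\varphi\mathbb{Z}^+$ and $\tilde x\in\tilde X$. Then $$\|\Pi_{\tilde x}(\tilde F)\|=\sup\{\|\pi_y(F)\| : y=p(\tilde y)\text{ for some }\tilde y\in\mathrm{Orbit}(\tilde x)\},$$ where $\mathrm{Orbit}(\tilde x)=\{\tilde\varphi^n(\tilde x):n\in\mathbb{Z}\}$.
   Context: Minimal homeomorphism extension: $\tilde X=\{(x_1,x_2,\dots)\in\prod_{n\ge1}X : x_n=\varphi(x_{n+1})\ \forall n\}$, $\tilde\varphi(x_1,x_2,\dots)=(\varphi(x_1),x_1,x_2,\dots)$ (a homeomorphism), $p(x_1,x_2,\dots)=x_1$, so $p\circ\tilde\varphi=\varphi\circ p$. Semicrossed product: let $\mathcal{A}_0$ be the algebra generated by $C(X)$ and $U$ subject to $fU=U(f\circ\varphi)$, elements $\sum_{n=0}^NU^nf_n$; $C(X)\rtimes_\varphi\mathbb{Z}^+$ is its completion in the norm $\sup_\pi\|\pi(F)\|$ over homomorphisms that are $*$-representations on $C(X)$ with $\pi(U)$ an isometry. Similarly for $C(\tilde X)\rtimes_{\tilde\varphi}\mathbb{Z}^+$ with generator $\tilde U$. For $F=\sum U^nf_n$ put $\tilde F=\sum\tilde U^n(f_n\circ p)$, extended by continuity to $C(X)\rtimes_\varphi\mathbb{Z}^+$. For $y\in X$, $\pi_y$ acts on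 $\ell^2(\mathbb{N})$ by $\pi_y(f)(z_1,z_2,\dots)=(f(y)z_1,f(\varphi(y))z_2,f(\varphi^2(y))z_3,\dots)$ and $\pi_y(U)(z_1,z_2,\dots)=(0,z_1,z_2,\dots)$. For $\tilde x\in\tilde X$, $\Pi_{\tilde x}$ acts on $\ell^2(\mathbb{Z})$ by $(\Pi_{\tilde x}(\tilde U)\xi)_n=\xi_{n-1}$ and $(\Pi_{\tilde x}(g)\xi)_n=g(\tilde\varphi^n(\tilde x))\xi_n$ for $g\in C(\tilde X)$. *)

theory Defs
  imports "HOL-Analysis.Analysis"
begin

definition l2 :: "('i \<Rightarrow> complex) set" where
  "l2 = {\<xi>. (\<lambda>i. (cmod (\<xi> i))^2) summable_on UNIV}"

definition l2norm :: "('i \<Rightarrow> complex) \<Rightarrow> real" where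
  "l2norm \<xi> = sqrt (\<Sum>\<^sub>\<infinity>i. (cmod (\<xi> i))^2)"

definition l2inner :: "('i \<Rightarrow> complex) \<Rightarrow> ('i \<Rightarrow> complex) \<Rightarrow> complex" where
  "l2inner \<xi> \<eta> = (\<Sum>\<^sub>\<infinity>i. \<xi> i * cnj (\<eta> i))"

definition opnorm :: "(('i \<Rightarrow> complex) \<Rightarrow> ('i \<Rightarrow> complex)) \<Rightarrow> real" where
  "opnorm T = Sup {l2norm (T \<xi>) | \<xi>. \<xi> \<in> l2 \<and> l2norm \<xi> \<le> 1}"

definition bounded_op :: "(('i \<Rightarrow> complex) \<Rightarrow> ('i \<Rightarrow> complex)) \<Rightarrow> bool" where
  "bounded_op T \<longleftrightarrow>
     (\<forall>\<xi>\<in>l2. T \<xi> \<in> l2) \<and>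
     (\<forall>\<xi>\<in>l2. \<forall>\<eta>\<in>l2. T (\<lambda>i. \<xi> i + \<eta> i) = (\<lambda>i. T \<xi> i + T \<eta> i)) \<and>
     (\<forall>c. \<forall>\<xi>\<in>l2. T (\<lambda>i. c * \<xi> i) = (\<lambda>i. c * T \<xi> i)) \<and>
     (\<exists>C. \<forall>\<xi>\<in>l2. l2norm (T \<xi>) \<le> C * l2norm \<xi>)"

definition star_rep ::
  "(('a::topological_space \<Rightarrow> complex) \<Rightarrow> ('i \<Rightarrow> complex) \<Rightarrow> ('i \<Rightarrow> complex)) \<Rightarrow> bool" where
  "star_rep \<rho> \<longleftrightarrow>
     (\<forall>f. continuous_on UNIV f \<longrightarrow> bounded_op (\<rho> f)) \<and>
     (\<forall>f g. continuous_on UNIV f \<longrightarrow> continuous_on UNIV g \<longrightarrow>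
        (\<forall>\<xi>\<in>l2. \<rho> (\<lambda>x. f x + g x) \<xi> = (\<lambda>i. \<rho> f \<xi> i + \<rho> g \<xi> i)
               \<and> \<rho> (\<lambda>x. f x * g x) \<xi> = \<rho> f (\<rho> g \<xi>))) \<and>
     (\<forall>c f. continuous_on UNIV f \<longrightarrow>
        (\<forall>\<xi>\<in>l2. \<rho> (\<lambda>x. c * f x) \<xi> = (\<lambda>i. c * \<rho> f \<xi> i))) \<and>
     (\<forall>f. continuous_on UNIV f \<longrightarrow>
        (\<forall>\<xi>\<in>l2. \<forall>\<eta>\<in>l2. l2inner (\<rho> f \<xi>) \<eta> = l2inner \<xi> (\<rho> (\<lambda>x. cnj (f x)) \<eta>)))"

text \<open>A homomorphism of the algebra A0 generated by C(X) and U with f U = U (f o phi),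
  which is a *-representation on C(X) and maps U to an isometry V.\<close>
definition cov_rep ::
  "('a::topological_space \<Rightarrow> 'a) \<Rightarrow> (('a \<Rightarrow> complex) \<Rightarrow> ('i \<Rightarrow> complex) \<Rightarrow> ('i \<Rightarrow> complex))
     \<Rightarrow> (('i \<Rightarrow> complex) \<Rightarrow> ('i \<Rightarrow> complex)) \<Rightarrow> bool" where
  "cov_rep \<phi> \<rho> V \<longleftrightarrow> star_rep \<rho> \<and> bounded_op V \<and> (\<forall>\<xi>\<in>l2. l2norm (V \<xi>) = l2norm \<xi>) \<and>
     (\<forall>f. continuous_on UNIV f \<longrightarrow> (\<forall>\<xi>\<in>l2. \<rho> f (V \<xi>) = V (\<rho> (f \<circ> \<phi>) \<xi>)))"

text \<open>Elements of A0: F = sum_n U^n f_n, coded by the coefficient sequence n |-> f_n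
  (finitely supported, continuous coefficients).\<close>
definition poly_elems :: "(nat \<Rightarrow> 'a::topological_space \<Rightarrow> complex) set" where
  "poly_elems = {F. finite {n. \<exists>x. F n x \<noteq> 0} \<and> (\<forall>n. continuous_on UNIV (F n))}"

definition rep ::
  "(('x \<Rightarrow> complex) \<Rightarrow> ('i \<Rightarrow> complex) \<Rightarrow> ('i \<Rightarrow> complex))
     \<Rightarrow> (('i \<Rightarrow> complex) \<Rightarrow> ('i \<Rightarrow> complex)) \<Rightarrow> (nat \<Rightarrow> 'x \<Rightarrow> complex)
     \<Rightarrow> ('i \<Rightarrow> complex) \<Rightarrow> ('i \<Rightarrow> complex)" where
  "rep \<rho> V F \<xi> = (\<lambda>i. \<Sum>n\<in>{n. \<exists>x. F n x \<noteq> 0}. (V ^^ n) (\<rho> (F n) \<xi>) i)"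

text \<open>Hilbert spaces are taken to be l2(I) with I of the type nat => 'a => complex, which is
  large enough to contain (a copy of) every cyclic subspace.\<close>
definition univ_norm :: "('a::topological_space \<Rightarrow> 'a) \<Rightarrow> (nat \<Rightarrow> 'a \<Rightarrow> complex) \<Rightarrow> real" where
  "univ_norm \<phi> F = Sup {opnorm (rep \<rho> V F) | 
      (\<rho> :: ('a \<Rightarrow> complex) \<Rightarrow> ((nat \<Rightarrow> 'a \<Rightarrow> complex) \<Rightarrow> complex) \<Rightarrow> ((nat \<Rightarrow> 'a \<Rightarrow> complex) \<Rightarrow> complex))
      V. cov_rep \<phi> \<rho> V}"

section \<open>Minimal homeomorphism extension (sequences indexed from 0: x 0 = x_1)\<close>

definition Xt :: "('a \<Rightarrow> 'a) \<Rightarrow> (nat \<Rightarrow> 'a) set" where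
  "Xt \<phi> = {x. \<forall>n. x n = \<phi> (x (Suc n))}"

definition tphi :: "('a \<Rightarrow> 'a) \<Rightarrow> (nat \<Rightarrow> 'a) \<Rightarrow> (nat \<Rightarrow> 'a)" where
  "tphi \<phi> x = (\<lambda>n. case n of 0 \<Rightarrow> \<phi> (x 0) | Suc m \<Rightarrow> x m)"

text \<open>The inverse of tphi on Xt: (x_1, x_2, ...) |-> (x_2, x_3, ...).\<close>
definition tshift :: "(nat \<Rightarrow> 'a) \<Rightarrow> (nat \<Rightarrow> 'a)" where
  "tshift x = (\<lambda>n. x (Suc n))"

definition tphi_pow :: "('a \<Rightarrow> 'a) \<Rightarrow> int \<Rightarrow> (nat \<Rightarrow> 'a) \<Rightarrow> (nat \<Rightarrow> 'a)" where
  "tphi_pow \<phi> n x = (if 0 \<le> n then (tphi \<phi> ^^ nat n) x else (tshift ^^ nat (- n)) x)"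

definition orbit :: "('a \<Rightarrow> 'a) \<Rightarrow> (nat \<Rightarrow> 'a) \<Rightarrow> (nat \<Rightarrow> 'a) set" where
  "orbit \<phi> x = range (\<lambda>n::int. tphi_pow \<phi> n x)"

definition pext :: "(nat \<Rightarrow> 'a) \<Rightarrow> 'a" where
  "pext x = x 0"

definition tilde :: "(nat \<Rightarrow> 'a \<Rightarrow> complex) \<Rightarrow> (nat \<Rightarrow> (nat \<Rightarrow> 'a) \<Rightarrow> complex)" where
  "tilde F = (\<lambda>n. F n \<circ> pext)"

definition pi_y :: "('a \<Rightarrow> 'a) \<Rightarrow> 'a \<Rightarrow> (nat \<Rightarrow> 'a \<Rightarrow> complex) \<Rightarrow> (nat \<Rightarrow> complex) \<Rightarrow> (nat \<Rightarrow> complex)" where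
  "pi_y \<phi> y F = rep (\<lambda>f z k. f ((\<phi> ^^ k) y) * z k) (\<lambda>z k. if k = 0 then 0 else z (k - 1)) F"

definition Pi_x :: "('a \<Rightarrow> 'a) \<Rightarrow> (nat \<Rightarrow> 'a) \<Rightarrow> (nat \<Rightarrow> (nat \<Rightarrow> 'a) \<Rightarrow> complex)
     \<Rightarrow> (int \<Rightarrow> complex) \<Rightarrow> (int \<Rightarrow> complex)" where
  "Pi_x \<phi> xt G = rep (\<lambda>g \<xi> n. g (tphi_pow \<phi> n xt) * \<xi> n) (\<lambda>\<xi> n. \<xi> (n - 1)) G"

end

theory Submission
  imports Defs
begin

text \<open>
  For \<open>y\<^sub>m = p(\<phi>\<^sup>~\<^sup>m x\<^sup>~)\<close> the operator \<open>\<Pi>\<^sub>x\<^sub>~(F\<^sup>~)\<close> restricted to \<open>\<ell>\<^sup>2([m, \<infinity>))\<close> is a copy of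
  \<open>\<pi>\<^sub>y\<^sub>m(F)\<close>, and every vector of \<open>\<ell>\<^sup>2(\<int>)\<close> is supported on such a half-line up to an arbitrarily small
  remainder; hence \<open>\<parallel>\<Pi>\<^sub>x\<^sub>~(F\<^sup>~)\<parallel> = sup\<^sub>m \<parallel>\<pi>\<^sub>y\<^sub>m(F)\<parallel>\<close> for every polynomial \<open>F\<close>.
  Since \<open>\<ell>\<^sup>2(\<int>)\<close> sits inside the Hilbert space of the universal norm and the multiplication
  operators and the shift there form a covariant representation, \<open>\<parallel>\<pi>\<^sub>y\<^sub>m(F)\<parallel> \<le> \<parallel>\<Pi>\<^sub>x\<^sub>~(F\<^sup>~)\<parallel>\<close> is
  dominated by the universal norm of \<open>F\<close>. So along a Cauchy sequence \<open>F\<^sub>k\<close> of polynomials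
  the functions \<open>m \<mapsto> \<parallel>\<pi>\<^sub>y\<^sub>m(F\<^sub>k)\<parallel>\<close> converge uniformly, and suprema commute with uniform limits.
\<close>

section \<open>Square-summable sequences\<close>

lemma l2norm_nonneg: "0 \<le> l2norm \<xi>"
  by (simp add: l2norm_def infsum_nonneg)

lemma l2norm_power2: "(l2norm \<xi>)^2 = (\<Sum>\<^sub>\<infinity>i. (cmod (\<xi> i))^2)"
  by (simp add: l2norm_def infsum_nonneg)

lemma l2norm_leI: "(\<Sum>\<^sub>\<infinity>i. (cmod (\<xi> i))^2) \<le> c^2 \<Longrightarrow> 0 \<le> c \<Longrightarrow> l2norm \<xi> \<le> c"
  unfolding l2norm_def by (rule real_le_lsqrt)

lemma zero_in_l2: "(\<lambda>i. 0) \<in> l2"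
  and l2norm_zero: "l2norm (\<lambda>i. 0) = 0"
  by (simp_all add: l2_def l2norm_def)

lemma l2_mono:
  assumes "\<eta> \<in> l2" "\<And>i. cmod (\<xi> i) \<le> cmod (\<eta> i)"
  shows "\<xi> \<in> l2" "l2norm \<xi> \<le> l2norm \<eta>"
proof -
  have s: "(\<lambda>i. (cmod (\<eta> i))^2) summable_on UNIV" using assms(1) by (simp add: l2_def)
  have le: "\<And>i. (cmod (\<xi> i))^2 \<le> (cmod (\<eta> i))^2"
    using assms(2) by (simp add: power_mono)
  have s2: "(\<lambda>i. (cmod (\<xi> i))^2) summable_on UNIV"
    by (rule summable_on_comparison_test[OF s]) (use le in auto)
  then show "\<xi> \<in> l2" by (simp add: l2_def)
  show "l2norm \<xi> \<le> l2norm \<eta>"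
    unfolding l2norm_def by (rule real_sqrt_le_mono, rule infsum_mono[OF s2 s]) (use le in auto)
qed

lemma l2_mult_bounded:
  assumes "\<xi> \<in> l2" "\<And>i. cmod (b i) \<le> B"
  shows "(\<lambda>i. b i * \<xi> i) \<in> l2" "l2norm (\<lambda>i. b i * \<xi> i) \<le> B * l2norm \<xi>"
proof -
  have B0: "0 \<le> B" using assms(2) norm_ge_zero order_trans by blast
  have s: "(\<lambda>i. (cmod (\<xi> i))^2) summable_on UNIV" using assms(1) by (simp add: l2_def)
  have s1: "(\<lambda>i. B^2 * (cmod (\<xi> i))^2) summable_on UNIV"
    by (rule summable_on_cmult_right[OF s])
  have le: "(cmod (b i * \<xi> i))^2 \<le> B^2 * (cmod (\<xi> i))^2" for i
  proof -
    have "cmod (b i * \<xi> i) \<le> B * cmod (\<xi> i)"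
      by (simp add: norm_mult mult_right_mono assms(2))
    then show ?thesis by (metis power_mono norm_ge_zero power_mult_distrib)
  qed
  have s2: "(\<lambda>i. (cmod (b i * \<xi> i))^2) summable_on UNIV"
    by (rule summable_on_comparison_test[OF s1]) (use le in auto)
  then show "(\<lambda>i. b i * \<xi> i) \<in> l2" by (simp add: l2_def)
  have "(\<Sum>\<^sub>\<infinity>i. (cmod (b i * \<xi> i))^2) \<le> (\<Sum>\<^sub>\<infinity>i. B^2 * (cmod (\<xi> i))^2)"
    by (rule infsum_mono[OF s2 s1]) (use le in auto)
  also have "\<dots> = (B * l2norm \<xi>)^2"
    using B0 by (simp add: infsum_cmult_right[OF s] l2norm_power2 power_mult_distrib)
  finally have "(\<Sum>\<^sub>\<infinity>i. (cmod (b i * \<xi> i))^2) \<le> (B * l2norm \<xi>)^2" .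
  then show "l2norm (\<lambda>i. b i * \<xi> i) \<le> B * l2norm \<xi>"
    by (rule l2norm_leI) (simp add: B0 l2norm_nonneg)
qed

lemma l2norm_eq_0D:
  assumes "\<xi> \<in> l2" "l2norm \<xi> = 0"
  shows "\<xi> i = 0"
proof -
  have s: "(\<lambda>i. (cmod (\<xi> i))^2) summable_on UNIV" using assms(1) by (simp add: l2_def)
  have "(\<Sum>\<^sub>\<infinity>i. (cmod (\<xi> i))^2) = 0" using assms(2) l2norm_power2[of \<xi>] by simp
  then have "(cmod (\<xi> i))^2 = 0"
    by (intro nonneg_infsum_le_0D[OF _ s]) auto
  then show ?thesis by simp
qed

text \<open>Sum the weighted AM-GM inequality \<open>a b \<le> (t/2) a\<^sup>2 + (1/(2t)) b\<^sup>2\<close> with \<open>t = \<parallel>\<eta>\<parallel>/\<parallel>\<xi>\<parallel>\<close>.\<close>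
lemma l2_cauchy_schwarz:
  assumes "\<xi> \<in> l2" "\<eta> \<in> l2"
  shows "(\<lambda>i. cmod (\<xi> i) * cmod (\<eta> i)) summable_on UNIV"
    "(\<Sum>\<^sub>\<infinity>i. cmod (\<xi> i) * cmod (\<eta> i)) \<le> l2norm \<xi> * l2norm \<eta>"
proof -
  have s1: "(\<lambda>i. (cmod (\<xi> i))^2) summable_on UNIV" using assms(1) by (simp add: l2_def)
  have s2: "(\<lambda>i. (cmod (\<eta> i))^2) summable_on UNIV" using assms(2) by (simp add: l2_def)
  have amgm: "a * b \<le> t / 2 * a^2 + 1 / (2 * t) * b^2" if "t > 0" for a b t :: real
  proof -
    have "0 \<le> (t * a - b)^2 / t" using that by simp
    then show ?thesis using that by (simp add: power2_eq_square field_simps)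
  qed
  have sw: "(\<lambda>i. t / 2 * (cmod (\<xi> i))^2 + 1 / (2 * t) * (cmod (\<eta> i))^2) summable_on UNIV" for t
    by (intro summable_on_add summable_on_cmult_right s1 s2)
  have sum_w: "(\<Sum>\<^sub>\<infinity>i. t / 2 * (cmod (\<xi> i))^2 + 1 / (2 * t) * (cmod (\<eta> i))^2)
      = t / 2 * (l2norm \<xi>)^2 + 1 / (2 * t) * (l2norm \<eta>)^2" for t
    by (simp only: infsum_add[OF summable_on_cmult_right[OF s1] summable_on_cmult_right[OF s2]]
        infsum_cmult_right[OF s1] infsum_cmult_right[OF s2] l2norm_power2)
  show s: "(\<lambda>i. cmod (\<xi> i) * cmod (\<eta> i)) summable_on UNIV"
    by (rule summable_on_comparison_test[OF sw[of 1]]) (use amgm[of 1] in auto)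
  show "(\<Sum>\<^sub>\<infinity>i. cmod (\<xi> i) * cmod (\<eta> i)) \<le> l2norm \<xi> * l2norm \<eta>"
  proof (cases "l2norm \<xi> = 0 \<or> l2norm \<eta> = 0")
    case True
    then have "(\<lambda>i. cmod (\<xi> i) * cmod (\<eta> i)) = (\<lambda>i. 0)"
      using l2norm_eq_0D[OF assms(1)] l2norm_eq_0D[OF assms(2)] by auto
    then show ?thesis by (simp add: l2norm_nonneg)
  next
    case False
    define t where "t = l2norm \<eta> / l2norm \<xi>"
    have t: "t > 0" using False l2norm_nonneg[of \<xi>] l2norm_nonneg[of \<eta>] by (simp add: t_def)
    have "(\<Sum>\<^sub>\<infinity>i. cmod (\<xi> i) * cmod (\<eta> i))
        \<le> (\<Sum>\<^sub>\<infinity>i. t / 2 * (cmod (\<xi> i))^2 + 1 / (2 * t) * (cmod (\<eta> i))^2)"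
      by (rule infsum_mono[OF s sw]) (use amgm t in auto)
    also have "\<dots> = l2norm \<xi> * l2norm \<eta>"
      using False unfolding sum_w by (simp add: t_def power2_eq_square field_simps)
    finally show ?thesis .
  qed
qed

lemma l2_add:
  assumes "\<xi> \<in> l2" "\<eta> \<in> l2"
  shows "(\<lambda>i. \<xi> i + \<eta> i) \<in> l2" "l2norm (\<lambda>i. \<xi> i + \<eta> i) \<le> l2norm \<xi> + l2norm \<eta>"
proof -
  have s1: "(\<lambda>i. (cmod (\<xi> i))^2) summable_on UNIV" using assms(1) by (simp add: l2_def)
  have s2: "(\<lambda>i. (cmod (\<eta> i))^2) summable_on UNIV" using assms(2) by (simp add: l2_def)
  note s3 = l2_cauchy_schwarz(1)[OF assms]
  have sr: "(\<lambda>i. (cmod (\<xi> i))^2 + 2 * (cmod (\<xi> i) * cmod (\<eta> i)) + (cmod (\<eta> i))^2) summable_on UNIV"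
    by (intro summable_on_add summable_on_cmult_right s1 s2 s3)
  have le: "(cmod (\<xi> i + \<eta> i))^2 \<le> (cmod (\<xi> i))^2 + 2 * (cmod (\<xi> i) * cmod (\<eta> i)) + (cmod (\<eta> i))^2" for i
  proof -
    have "(cmod (\<xi> i + \<eta> i))^2 \<le> (cmod (\<xi> i) + cmod (\<eta> i))^2"
      by (simp add: power_mono norm_triangle_ineq)
    then show ?thesis by (simp add: power2_sum)
  qed
  have s: "(\<lambda>i. (cmod (\<xi> i + \<eta> i))^2) summable_on UNIV"
    by (rule summable_on_comparison_test[OF sr]) (use le in auto)
  then show "(\<lambda>i. \<xi> i + \<eta> i) \<in> l2" by (simp add: l2_def)
  have "(\<Sum>\<^sub>\<infinity>i. (cmod (\<xi> i + \<eta> i))^2)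
      \<le> (\<Sum>\<^sub>\<infinity>i. (cmod (\<xi> i))^2 + 2 * (cmod (\<xi> i) * cmod (\<eta> i)) + (cmod (\<eta> i))^2)"
    by (rule infsum_mono[OF s sr]) (use le in auto)
  also have "\<dots> = (l2norm \<xi>)^2 + 2 * (\<Sum>\<^sub>\<infinity>i. cmod (\<xi> i) * cmod (\<eta> i)) + (l2norm \<eta>)^2"
    using s1 s2 s3 by (simp add: infsum_add summable_on_add summable_on_cmult_right
        infsum_cmult_right l2norm_power2)
  also have "\<dots> \<le> (l2norm \<xi> + l2norm \<eta>)^2"
    using l2_cauchy_schwarz(2)[OF assms] by (simp add: power2_sum)
  finally show "l2norm (\<lambda>i. \<xi> i + \<eta> i) \<le> l2norm \<xi> + l2norm \<eta>"
    by (rule l2norm_leI) (simp add: l2norm_nonneg)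
qed

lemma l2_sum:
  assumes "finite S" "\<And>n. n \<in> S \<Longrightarrow> f n \<in> l2"
  shows "(\<lambda>i. \<Sum>n\<in>S. f n i) \<in> l2 \<and> l2norm (\<lambda>i. \<Sum>n\<in>S. f n i) \<le> (\<Sum>n\<in>S. l2norm (f n))"
  using assms
proof (induction S rule: finite_induct)
  case empty
  then show ?case by (simp add: zero_in_l2 l2norm_zero)
next
  case (insert x F)
  then show ?case
    using l2_add[of "f x" "\<lambda>i. \<Sum>n\<in>F. f n i"] by force
qed

lemma l2_reindex_bij:
  assumes "bij \<sigma>" "\<xi> \<in> l2"
  shows "(\<lambda>i. \<xi> (\<sigma> i)) \<in> l2" "l2norm (\<lambda>i. \<xi> (\<sigma> i)) = l2norm \<xi>"
proof -
  have b: "bij_betw \<sigma> UNIV UNIV" using assms(1) by (simp add: bij_def)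
  show "(\<lambda>i. \<xi> (\<sigma> i)) \<in> l2" using assms(2)
    summable_on_reindex_bij_betw[OF b, of "\<lambda>i. (cmod (\<xi> i))^2"] by (simp add: l2_def)
  show "l2norm (\<lambda>i. \<xi> (\<sigma> i)) = l2norm \<xi>"
    using infsum_reindex_bij_betw[OF b, of "\<lambda>i. (cmod (\<xi> i))^2"] by (simp add: l2norm_def)
qed

lemma l2_extend_by_zero:
  fixes w :: "'i \<Rightarrow> complex" and z :: "'j \<Rightarrow> complex"
  assumes "inj e" "\<And>j. w (e j) = z j" "\<And>i. i \<notin> range e \<Longrightarrow> w i = 0"
  shows "w \<in> l2 \<longleftrightarrow> z \<in> l2" "l2norm w = l2norm z"
proof -
  have "(\<lambda>i. (cmod (w i))^2) summable_on UNIV \<longleftrightarrow> (\<lambda>i. (cmod (w i))^2) summable_on range e"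
    by (rule summable_on_cong_neutral) (use assms(3) in auto)
  also have "\<dots> \<longleftrightarrow> (\<lambda>j. (cmod (z j))^2) summable_on UNIV"
    using summable_on_reindex[of e UNIV "\<lambda>i. (cmod (w i))^2"] assms(1,2) by (simp add: o_def)
  finally show "w \<in> l2 \<longleftrightarrow> z \<in> l2" by (simp add: l2_def)
  have "(\<Sum>\<^sub>\<infinity>i. (cmod (w i))^2) = infsum (\<lambda>i. (cmod (w i))^2) (range e)"
    by (rule infsum_cong_neutral) (use assms(3) in auto)
  also have "\<dots> = (\<Sum>\<^sub>\<infinity>j. (cmod (z j))^2)"
    using infsum_reindex[of e UNIV "\<lambda>i. (cmod (w i))^2"] assms(1,2) by (simp add: o_def)
  finally show "l2norm w = l2norm z" by (simp add: l2norm_def)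
qed

lemma l2inner_cauchy_schwarz:
  assumes "\<xi> \<in> l2" "\<eta> \<in> l2"
  shows "(\<lambda>i. \<xi> i * cnj (\<eta> i)) summable_on UNIV"
    "cmod (l2inner \<xi> \<eta>) \<le> l2norm \<xi> * l2norm \<eta>"
proof -
  have a: "Infinite_Sum.abs_summable_on (\<lambda>i. \<xi> i * cnj (\<eta> i)) UNIV"
    using l2_cauchy_schwarz(1)[OF assms] by (simp add: norm_mult)
  then show "(\<lambda>i. \<xi> i * cnj (\<eta> i)) summable_on UNIV" by (rule abs_summable_summable)
  have "cmod (l2inner \<xi> \<eta>) \<le> (\<Sum>\<^sub>\<infinity>i. cmod (\<xi> i * cnj (\<eta> i)))"
    unfolding l2inner_def by (rule norm_infsum_bound[OF a])
  also have "\<dots> \<le> l2norm \<xi> * l2norm \<eta>" using l2_cauchy_schwarz(2)[OF assms] by (simp add: norm_mult)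
  finally show "cmod (l2inner \<xi> \<eta>) \<le> l2norm \<xi> * l2norm \<eta>" .
qed

lemma l2inner_self:
  assumes "\<xi> \<in> l2"
  shows "l2inner \<xi> \<xi> = of_real ((l2norm \<xi>)^2)"
proof -
  have s: "(\<lambda>i. (cmod (\<xi> i))^2) summable_on UNIV" using assms by (simp add: l2_def)
  have "((\<lambda>i. of_real ((cmod (\<xi> i))^2) :: complex) has_sum of_real (\<Sum>\<^sub>\<infinity>i. (cmod (\<xi> i))^2)) UNIV"
    by (rule has_sum_of_real) (use s in \<open>simp add: summable_iff_has_sum_infsum\<close>)
  moreover have "\<And>i. \<xi> i * cnj (\<xi> i) = of_real ((cmod (\<xi> i))^2)"
    by (metis complex_norm_square of_real_power)
  ultimately show ?thesis unfolding l2inner_def l2norm_power2 by (simp add: infsumI)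
qed

lemma l2inner_linear_right:
  assumes "\<xi> \<in> l2" "\<eta> \<in> l2" "\<zeta> \<in> l2"
  shows "l2inner \<xi> (\<lambda>i. a * \<eta> i + b * \<zeta> i) = cnj a * l2inner \<xi> \<eta> + cnj b * l2inner \<xi> \<zeta>"
proof -
  note s = l2inner_cauchy_schwarz(1)[OF assms(1,2)] l2inner_cauchy_schwarz(1)[OF assms(1,3)]
  have "l2inner \<xi> (\<lambda>i. a * \<eta> i + b * \<zeta> i)
      = (\<Sum>\<^sub>\<infinity>i. cnj a * (\<xi> i * cnj (\<eta> i)) + cnj b * (\<xi> i * cnj (\<zeta> i)))"
    unfolding l2inner_def by (simp add: algebra_simps)
  also have "\<dots> = cnj a * l2inner \<xi> \<eta> + cnj b * l2inner \<xi> \<zeta>"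
    unfolding l2inner_def using s
    by (simp add: infsum_add summable_on_cmult_right infsum_cmult_right)
  finally show ?thesis .
qed

section \<open>Bounded operators and the operator norm\<close>

definition bounded_by :: "real \<Rightarrow> (('i \<Rightarrow> complex) \<Rightarrow> ('i \<Rightarrow> complex)) \<Rightarrow> bool" where
  "bounded_by C T \<longleftrightarrow> 0 \<le> C \<and> (\<forall>\<xi>\<in>l2. T \<xi> \<in> l2 \<and> l2norm (T \<xi>) \<le> C * l2norm \<xi>)"

lemma bounded_byD:
  assumes "bounded_by C T" "\<xi> \<in> l2"
  shows "T \<xi> \<in> l2" "l2norm (T \<xi>) \<le> C * l2norm \<xi>"
  using assms by (auto simp: bounded_by_def)

lemma bounded_by_unit_ball:
  assumes "bounded_by C T" "\<xi> \<in> l2" "l2norm \<xi> \<le> 1"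
  shows "l2norm (T \<xi>) \<le> C"
proof -
  have "C * l2norm \<xi> \<le> C" using assms(1,3) mult_left_le by (auto simp: bounded_by_def)
  then show ?thesis using bounded_byD(2)[OF assms(1,2)] by linarith
qed

lemma opnorm_least:
  fixes T :: "('i \<Rightarrow> complex) \<Rightarrow> ('i \<Rightarrow> complex)"
  assumes "\<And>\<xi>. \<xi> \<in> l2 \<Longrightarrow> l2norm \<xi> \<le> 1 \<Longrightarrow> l2norm (T \<xi>) \<le> C"
  shows "opnorm T \<le> C"
  unfolding opnorm_def
proof (rule cSup_least)
  have "(\<lambda>i::'i. 0::complex) \<in> l2 \<and> l2norm (\<lambda>i::'i. 0::complex) \<le> 1"
    by (simp add: zero_in_l2 l2norm_zero)
  then show "{l2norm (T \<xi>) |\<xi>. \<xi> \<in> l2 \<and> l2norm \<xi> \<le> 1} \<noteq> {}" by blast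
qed (use assms in blast)

lemma opnorm_le_bound: "bounded_by C T \<Longrightarrow> opnorm T \<le> C"
  by (rule opnorm_least) (rule bounded_by_unit_ball)

lemma l2norm_le_opnorm:
  assumes "bounded_by C T" "\<xi> \<in> l2" "l2norm \<xi> \<le> 1"
  shows "l2norm (T \<xi>) \<le> opnorm T"
  unfolding opnorm_def
proof (rule cSup_upper)
  show "l2norm (T \<xi>) \<in> {l2norm (T \<xi>) |\<xi>. \<xi> \<in> l2 \<and> l2norm \<xi> \<le> 1}" using assms(2,3) by blast
  show "bdd_above {l2norm (T \<xi>) |\<xi>. \<xi> \<in> l2 \<and> l2norm \<xi> \<le> 1}"
    by (rule bdd_aboveI[of _ C]) (use bounded_by_unit_ball[OF assms(1)] in blast)
qed

lemma opnorm_add_le: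
  fixes R S T :: "('i \<Rightarrow> complex) \<Rightarrow> ('i \<Rightarrow> complex)"
  assumes "bounded_by c S" "bounded_by c' T" "\<And>\<xi>. \<xi> \<in> l2 \<Longrightarrow> R \<xi> = (\<lambda>i. S \<xi> i + T \<xi> i)"
  shows "opnorm R \<le> opnorm S + opnorm T"
proof (rule opnorm_least)
  fix \<xi> :: "'i \<Rightarrow> complex" assume \<xi>: "\<xi> \<in> l2" "l2norm \<xi> \<le> 1"
  have "l2norm (R \<xi>) \<le> l2norm (S \<xi>) + l2norm (T \<xi>)"
    unfolding assms(3)[OF \<xi>(1)] by (intro l2_add bounded_byD[OF assms(1)] bounded_byD[OF assms(2)] \<xi>)
  also have "\<dots> \<le> opnorm S + opnorm T"
    using l2norm_le_opnorm[OF assms(1) \<xi>] l2norm_le_opnorm[OF assms(2) \<xi>] by linarith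
  finally show "l2norm (R \<xi>) \<le> opnorm S + opnorm T" .
qed

lemma bounded_by_mult:
  assumes "\<And>i. cmod (b i) \<le> B"
  shows "bounded_by B (\<lambda>\<xi> i. b i * \<xi> i)"
proof -
  have "0 \<le> B" using assms[of undefined] norm_ge_zero order_trans by blast
  then show ?thesis using l2_mult_bounded assms unfolding bounded_by_def by blast
qed

lemma bounded_by_isometry:
  "(\<And>\<xi>. \<xi> \<in> l2 \<Longrightarrow> T \<xi> \<in> l2 \<and> l2norm (T \<xi>) = l2norm \<xi>) \<Longrightarrow> bounded_by 1 T"
  by (simp add: bounded_by_def)

lemma bounded_by_sum:
  fixes T :: "'n \<Rightarrow> ('i \<Rightarrow> complex) \<Rightarrow> ('i \<Rightarrow> complex)"
  assumes "finite S" "\<And>n. n \<in> S \<Longrightarrow> bounded_by (C n) (T n)"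
  shows "bounded_by (\<Sum>n\<in>S. C n) (\<lambda>\<xi> i. \<Sum>n\<in>S. T n \<xi> i)"
  unfolding bounded_by_def
proof (intro conjI ballI)
  show "0 \<le> (\<Sum>n\<in>S. C n)" using assms(2) by (intro sum_nonneg) (auto simp: bounded_by_def)
  fix \<xi> :: "'i \<Rightarrow> complex" assume \<xi>: "\<xi> \<in> l2"
  note T = bounded_byD[OF assms(2) \<xi>]
  have "(\<lambda>i. \<Sum>n\<in>S. T n \<xi> i) \<in> l2 \<and> l2norm (\<lambda>i. \<Sum>n\<in>S. T n \<xi> i) \<le> (\<Sum>n\<in>S. l2norm (T n \<xi>))"
    by (rule l2_sum[OF assms(1)]) (use T in blast)
  moreover have "(\<Sum>n\<in>S. l2norm (T n \<xi>)) \<le> (\<Sum>n\<in>S. C n) * l2norm \<xi>"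
    unfolding sum_distrib_right by (rule sum_mono) (use T in blast)
  ultimately show "(\<lambda>i. \<Sum>n\<in>S. T n \<xi> i) \<in> l2"
    "l2norm (\<lambda>i. \<Sum>n\<in>S. T n \<xi> i) \<le> (\<Sum>n\<in>S. C n) * l2norm \<xi>" by auto
qed

lemma bounded_by_comp:
  "bounded_by C S \<Longrightarrow> bounded_by D T \<Longrightarrow> bounded_by (C * D) (\<lambda>\<xi>. S (T \<xi>))"
proof -
  assume S: "bounded_by C S" and T: "bounded_by D T"
  have "l2norm (S (T \<xi>)) \<le> C * D * l2norm \<xi>" if "\<xi> \<in> l2" for \<xi>
  proof -
    have "l2norm (S (T \<xi>)) \<le> C * l2norm (T \<xi>)"
      by (rule bounded_byD(2)[OF S bounded_byD(1)[OF T that]])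
    also have "\<dots> \<le> C * (D * l2norm \<xi>)"
      using S bounded_byD(2)[OF T that] by (simp add: bounded_by_def mult_left_mono)
    finally show ?thesis by (simp add: mult.assoc)
  qed
  then show ?thesis using S T by (simp add: bounded_by_def)
qed

lemma bounded_by_funpow: "bounded_by 1 V \<Longrightarrow> bounded_by 1 (V ^^ n)"
proof (induction n)
  case 0
  then show ?case by (simp add: bounded_by_def)
next
  case (Suc n)
  then show ?case using bounded_by_comp[of 1 V 1 "V ^^ n"] by simp
qed

section \<open>Representations of the semicrossed product\<close>

abbreviation supp :: "(nat \<Rightarrow> 'x \<Rightarrow> complex) \<Rightarrow> nat set" where
  "supp G \<equiv> {n. \<exists>x. G n x \<noteq> 0}"

lemma rep_bounded_by:
  assumes "finite (supp G)" "bounded_by 1 V" "\<And>n. bounded_by (B n) (\<rho> (G n))"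
  shows "bounded_by (\<Sum>n\<in>supp G. B n) (rep \<rho> V G)"
  unfolding rep_def
  using bounded_by_sum[OF assms(1), of B "\<lambda>n \<xi>. (V ^^ n) (\<rho> (G n) \<xi>)"]
    bounded_by_comp[OF bounded_by_funpow[OF assms(2)] assms(3)] by simp

lemma star_rep_l2: "star_rep \<rho> \<Longrightarrow> continuous_on UNIV f \<Longrightarrow> \<xi> \<in> l2 \<Longrightarrow> \<rho> f \<xi> \<in> l2"
  unfolding star_rep_def bounded_op_def by blast

lemma star_rep_lincomb:
  assumes "star_rep \<rho>" "continuous_on UNIV f" "continuous_on UNIV g" "\<xi> \<in> l2"
  shows "\<rho> (\<lambda>x. a * f x + b * g x) \<xi> = (\<lambda>i. a * \<rho> f \<xi> i + b * \<rho> g \<xi> i)"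
proof -
  have c: "continuous_on UNIV (\<lambda>x. a * f x)" "continuous_on UNIV (\<lambda>x. b * g x)"
    using assms(2,3) by (auto intro!: continuous_intros)
  have "\<rho> (\<lambda>x. a * f x + b * g x) \<xi> = (\<lambda>i. \<rho> (\<lambda>x. a * f x) \<xi> i + \<rho> (\<lambda>x. b * g x) \<xi> i)"
    using assms(1,4) c unfolding star_rep_def by blast
  moreover have "\<rho> (\<lambda>x. a * f x) \<xi> = (\<lambda>i. a * \<rho> f \<xi> i)" "\<rho> (\<lambda>x. b * g x) \<xi> = (\<lambda>i. b * \<rho> g \<xi> i)"
    using assms unfolding star_rep_def by blast+
  ultimately show ?thesis by simp
qed

lemma star_rep_norm_power2:
  assumes "star_rep \<rho>" "continuous_on UNIV f" "\<xi> \<in> l2"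
  shows "of_real ((l2norm (\<rho> f \<xi>))^2) = l2inner \<xi> (\<rho> (\<lambda>x. cnj (f x) * f x) \<xi>)"
proof -
  have c: "continuous_on UNIV (\<lambda>x. cnj (f x))" using assms(2) by (intro continuous_intros)
  have "of_real ((l2norm (\<rho> f \<xi>))^2) = l2inner (\<rho> f \<xi>) (\<rho> f \<xi>)"
    using l2inner_self[OF star_rep_l2[OF assms]] by simp
  also have "\<dots> = l2inner \<xi> (\<rho> (\<lambda>x. cnj (f x)) (\<rho> f \<xi>))"
    using assms star_rep_l2[OF assms] unfolding star_rep_def by blast
  also have "\<rho> (\<lambda>x. cnj (f x)) (\<rho> f \<xi>) = \<rho> (\<lambda>x. cnj (f x) * f x) \<xi>"
    using assms c unfolding star_rep_def by simp
  finally show ?thesis .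
qed

lemma star_rep_one_contractive:
  assumes "star_rep \<rho>" "\<xi> \<in> l2"
  shows "l2norm (\<rho> (\<lambda>x. 1) \<xi>) \<le> l2norm \<xi>"
proof -
  let ?\<eta> = "\<rho> (\<lambda>x. 1) \<xi>"
  have "(l2norm ?\<eta>)^2 = cmod (l2inner \<xi> ?\<eta>)"
    using star_rep_norm_power2[OF assms(1) _ assms(2), of "\<lambda>x. 1"]
    by (metis complex_cnj_one mult_1 continuous_on_const norm_of_real abs_power2)
  also have "\<dots> \<le> l2norm \<xi> * l2norm ?\<eta>"
    by (rule l2inner_cauchy_schwarz[OF assms(2) star_rep_l2[OF assms(1) _ assms(2)]]) simp
  finally have sq: "l2norm ?\<eta> * l2norm ?\<eta> \<le> l2norm \<xi> * l2norm ?\<eta>"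
    by (simp add: power2_eq_square)
  show ?thesis
  proof (rule ccontr)
    assume "\<not> ?thesis"
    then have "l2norm \<xi> * l2norm ?\<eta> < l2norm ?\<eta> * l2norm ?\<eta>"
      using l2norm_nonneg[of \<xi>] by (intro mult_strict_right_mono) auto
    then show False using sq by linarith
  qed
qed

text \<open>With \<open>M = B\<^sup>2\<close> and \<open>g = \<surd>(M - \<bar>f\<bar>\<^sup>2)\<close> one has
  \<open>\<parallel>\<rho> f \<xi>\<parallel>\<^sup>2 = M \<langle>\<xi>, \<rho> 1 \<xi>\<rangle> - \<parallel>\<rho> g \<xi>\<parallel>\<^sup>2 \<le> M \<parallel>\<rho> 1 \<xi>\<parallel>\<^sup>2\<close>.\<close>
lemma star_rep_bounded_by:
  assumes \<rho>: "star_rep \<rho>" and f: "continuous_on UNIV f" and B: "\<And>x. cmod (f x) \<le> B"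
  shows "bounded_by B (\<rho> f)"
proof -
  have B0: "0 \<le> B" using B[of undefined] norm_ge_zero order_trans by blast
  define M where "M = B^2"
  define g where "g = (\<lambda>x. complex_of_real (sqrt (M - (cmod (f x))^2)))"
  have g: "continuous_on UNIV g" unfolding g_def using f by (intro continuous_intros)
  have q: "continuous_on UNIV (\<lambda>x. cnj (g x) * g x)" using g by (intro continuous_intros)
  have one: "continuous_on UNIV (\<lambda>x::'a. 1::complex)" by simp
  have M: "(cmod (f x))^2 \<le> M" for x unfolding M_def using B by (simp add: power_mono)
  have split: "cnj (f x) * f x = of_real M * 1 + (-1) * (cnj (g x) * g x)" for x
  proof -
    have "cnj (g x) * g x = of_real (M - (cmod (f x))^2)"
      using M[of x] unfolding g_def by (simp flip: of_real_mult)
    moreover have "cnj (f x) * f x = of_real ((cmod (f x))^2)"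
      by (metis complex_norm_square mult.commute of_real_power)
    ultimately show ?thesis by simp
  qed
  have "l2norm (\<rho> f \<xi>) \<le> B * l2norm \<xi>" if \<xi>: "\<xi> \<in> l2" for \<xi>
  proof -
    note l2 = star_rep_l2[OF \<rho> one \<xi>] star_rep_l2[OF \<rho> q \<xi>]
    have "of_real ((l2norm (\<rho> f \<xi>))^2) = l2inner \<xi> (\<rho> (\<lambda>x. cnj (f x) * f x) \<xi>)"
      by (rule star_rep_norm_power2[OF \<rho> f \<xi>])
    also have "\<dots> = of_real M * l2inner \<xi> (\<rho> (\<lambda>x. 1) \<xi>) - l2inner \<xi> (\<rho> (\<lambda>x. cnj (g x) * g x) \<xi>)"
      unfolding split star_rep_lincomb[OF \<rho> one q \<xi>] l2inner_linear_right[OF \<xi> l2] by simp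
    also have "\<dots> = of_real (M * (l2norm (\<rho> (\<lambda>x. 1) \<xi>))^2 - (l2norm (\<rho> g \<xi>))^2)"
      using star_rep_norm_power2[OF \<rho> one \<xi>] star_rep_norm_power2[OF \<rho> g \<xi>] by simp
    finally have "(l2norm (\<rho> f \<xi>))^2 \<le> M * (l2norm (\<rho> (\<lambda>x. 1) \<xi>))^2"
      by (simp only: of_real_eq_iff) simp
    also have "\<dots> \<le> (B * l2norm \<xi>)^2"
      unfolding M_def power_mult_distrib
      by (intro mult_left_mono power_mono star_rep_one_contractive[OF \<rho> \<xi>] l2norm_nonneg) simp
    finally show ?thesis
      by (rule power2_le_imp_le) (simp add: B0 l2norm_nonneg)
  qed
  then show ?thesis using B0 star_rep_l2[OF \<rho> f] by (simp add: bounded_by_def)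
qed

definition sup_norm :: "('a::topological_space \<Rightarrow> complex) \<Rightarrow> real" where
  "sup_norm f = (SUP x. cmod (f x))"

definition coeff_norm :: "(nat \<Rightarrow> 'a::topological_space \<Rightarrow> complex) \<Rightarrow> real" where
  "coeff_norm G = (\<Sum>n\<in>supp G. sup_norm (G n))"

lemma norm_le_sup_norm:
  assumes "compact (UNIV :: 'a::topological_space set)" "continuous_on UNIV (f :: 'a \<Rightarrow> complex)"
  shows "cmod (f x) \<le> sup_norm f"
proof -
  have "bounded (range f)" by (intro compact_imp_bounded compact_continuous_image assms)
  then have "bdd_above (range (\<lambda>x. cmod (f x)))"
    by (auto simp: bounded_iff bdd_above_def)
  then show ?thesis unfolding sup_norm_def by (rule cSUP_upper[OF UNIV_I])
qed

lemma cov_rep_bounded_by: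
  assumes "compact (UNIV :: 'a::topological_space set)" "cov_rep \<phi> \<rho> V" "G \<in> poly_elems"
  shows "bounded_by (coeff_norm G) (rep \<rho> V (G :: nat \<Rightarrow> 'a \<Rightarrow> complex))"
  unfolding coeff_norm_def
proof (rule rep_bounded_by)
  show "finite (supp G)" using assms(3) by (simp add: poly_elems_def)
  show "bounded_by 1 V" using assms(2) by (intro bounded_by_isometry) (simp add: cov_rep_def bounded_op_def)
  fix n
  have "star_rep \<rho>" using assms(2) by (simp add: cov_rep_def)
  moreover have c: "continuous_on UNIV (G n)" using assms(3) by (simp add: poly_elems_def)
  ultimately show "bounded_by (sup_norm (G n)) (\<rho> (G n))"
    using star_rep_bounded_by norm_le_sup_norm[OF assms(1) c] by blast
qed

lemma opnorm_rep_le_univ_norm: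
  fixes \<rho> :: "('a::topological_space \<Rightarrow> complex) \<Rightarrow> ((nat \<Rightarrow> 'a \<Rightarrow> complex) \<Rightarrow> complex)
      \<Rightarrow> ((nat \<Rightarrow> 'a \<Rightarrow> complex) \<Rightarrow> complex)"
  assumes "compact (UNIV :: 'a set)" "cov_rep \<phi> \<rho> V" "G \<in> poly_elems"
  shows "opnorm (rep \<rho> V G) \<le> univ_norm \<phi> G"
  unfolding univ_norm_def
proof (rule cSup_upper)
  show "opnorm (rep \<rho> V G) \<in> {opnorm (rep \<rho> V G) | (\<rho> :: ('a \<Rightarrow> complex) \<Rightarrow> ((nat \<Rightarrow> 'a \<Rightarrow> complex) \<Rightarrow> complex)
      \<Rightarrow> ((nat \<Rightarrow> 'a \<Rightarrow> complex) \<Rightarrow> complex)) V. cov_rep \<phi> \<rho> V}"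
    using assms(2) by (intro CollectI exI[of _ \<rho>] exI[of _ V]) simp
  show "bdd_above {opnorm (rep \<rho> V G) | (\<rho> :: ('a \<Rightarrow> complex) \<Rightarrow> ((nat \<Rightarrow> 'a \<Rightarrow> complex) \<Rightarrow> complex)
      \<Rightarrow> ((nat \<Rightarrow> 'a \<Rightarrow> complex) \<Rightarrow> complex)) V. cov_rep \<phi> \<rho> V}"
    using opnorm_le_bound[OF cov_rep_bounded_by[OF assms(1) _ assms(3)]]
    by (intro bdd_aboveI[of _ "coeff_norm G"]) blast
qed

definition orbit_point :: "('a \<Rightarrow> 'a) \<Rightarrow> (nat \<Rightarrow> 'a) \<Rightarrow> int \<Rightarrow> 'a" where
  "orbit_point \<phi> xt n = pext (tphi_pow \<phi> n xt)"

lemma orbit_point_eq: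
  "orbit_point \<phi> xt n = (if 0 \<le> n then (\<phi> ^^ nat n) (xt 0) else xt (nat (- n)))"
proof -
  have tphi: "(tphi \<phi> ^^ k) x 0 = (\<phi> ^^ k) (x 0)" for k x
    by (induction k) (simp_all add: tphi_def)
  have tshift: "(tshift ^^ k) x = (\<lambda>i. x (i + k))" for k and x :: "nat \<Rightarrow> 'a"
    by (induction k) (simp_all add: tshift_def)
  show ?thesis unfolding orbit_point_def pext_def tphi_pow_def
    by (cases "0 \<le> n") (simp_all only: if_True if_False tphi tshift add_0)
qed

lemma orbit_point_succ:
  assumes "xt \<in> Xt \<phi>"
  shows "orbit_point \<phi> xt (n + 1) = \<phi> (orbit_point \<phi> xt n)"
proof -
  have X: "xt k = \<phi> (xt (Suc k))" for k using assms unfolding Xt_def by blast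
  have "0 \<le> n \<or> n = -1 \<or> (\<exists>k. n = - int k - 2)" by presburger
  then consider "0 \<le> n" | "n = -1" | k where "n = - int k - 2" by blast
  then show ?thesis
  proof cases
    case 1
    then have "nat (n + 1) = Suc (nat n)" by simp
    then show ?thesis using 1 by (simp add: orbit_point_eq)
  next
    case 2
    then show ?thesis using X[of 0] by (simp add: orbit_point_eq)
  next
    case 3
    then show ?thesis using X[of "Suc k"] by (simp add: orbit_point_eq nat_add_distrib)
  qed
qed

lemma orbit_point_add:
  assumes "xt \<in> Xt \<phi>"
  shows "orbit_point \<phi> xt (m + int i) = (\<phi> ^^ i) (orbit_point \<phi> xt m)"
proof (induction i)
  case (Suc i)
  have "orbit_point \<phi> xt (m + int (Suc i)) = orbit_point \<phi> xt ((m + int i) + 1)"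
    by (simp add: algebra_simps)
  also have "\<dots> = \<phi> (orbit_point \<phi> xt (m + int i))" by (rule orbit_point_succ[OF assms])
  finally show ?case using Suc by simp
qed simp

lemma pext_orbit: "pext ` orbit \<phi> xt = range (orbit_point \<phi> xt)"
  unfolding orbit_def orbit_point_def by (simp add: image_image)

lemma supp_tilde: "supp (tilde G) = supp G"
proof -
  have "(\<exists>x. tilde G n x \<noteq> 0) \<longleftrightarrow> (\<exists>x. G n x \<noteq> 0)" for n
  proof
    assume "\<exists>x. G n x \<noteq> 0"
    then obtain x where "G n x \<noteq> 0" by blast
    then have "tilde G n (\<lambda>_. x) \<noteq> 0" by (simp add: tilde_def pext_def)
    then show "\<exists>x. tilde G n x \<noteq> 0" by blast
  qed (auto simp: tilde_def)
  then show ?thesis by simp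
qed

lemma pi_y_apply:
  "pi_y \<phi> y G z k = (\<Sum>j\<in>supp G. if j \<le> k then G j ((\<phi> ^^ (k - j)) y) * z (k - j) else 0)"
proof -
  have shift: "((\<lambda>z k. if k = 0 then 0 else z (k - 1)) ^^ j) z
      = (\<lambda>k. if j \<le> k then z (k - j) else (0::complex))" for j and z :: "nat \<Rightarrow> complex"
  proof (induction j)
    case (Suc j)
    show ?case
    proof
      fix k
      show "((\<lambda>z k. if k = 0 then 0 else z (k - 1)) ^^ Suc j) z k = (if Suc j \<le> k then z (k - Suc j) else 0)"
        using Suc by (cases k) auto
    qed
  qed simp
  show ?thesis unfolding pi_y_def rep_def shift
    by (rule sum.cong) (auto simp: funpow_add[symmetric] le_add_diff_inverse2)
qed

lemma Pi_x_tilde_apply: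
  "Pi_x \<phi> xt (tilde G) \<xi> n = (\<Sum>j\<in>supp G. G j (orbit_point \<phi> xt (n - int j)) * \<xi> (n - int j))"
proof -
  have shift: "((\<lambda>\<xi> n. \<xi> (n - 1)) ^^ j) \<xi> = (\<lambda>n. \<xi> (n - int j))" for j and \<xi> :: "int \<Rightarrow> complex"
    by (induction j) (simp_all add: algebra_simps)
  show ?thesis unfolding Pi_x_def rep_def shift supp_tilde
    by (simp add: tilde_def orbit_point_def)
qed

lemma pi_y_bounded_by:
  assumes "compact (UNIV :: 'a::topological_space set)" "G \<in> poly_elems"
  shows "bounded_by (coeff_norm G) (pi_y \<phi> y (G :: nat \<Rightarrow> 'a \<Rightarrow> complex))"
  unfolding pi_y_def coeff_norm_def
proof (rule rep_bounded_by)
  show "finite (supp G)" using assms(2) by (simp add: poly_elems_def)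
  show "bounded_by 1 (\<lambda>z (k::nat). if k = 0 then 0 else z (k - 1) :: complex)"
  proof (rule bounded_by_isometry)
    fix z :: "nat \<Rightarrow> complex" assume "z \<in> l2"
    moreover have "i \<notin> range Suc \<Longrightarrow> (if i = 0 then 0 else z (i - 1)) = 0" for i
      by (cases i) auto
    ultimately show "(\<lambda>k. if k = 0 then 0 else z (k - 1)) \<in> l2 \<and>
        l2norm (\<lambda>k. if k = 0 then 0 else z (k - 1)) = l2norm z"
      using l2_extend_by_zero[where e = Suc and z = z] by simp
  qed
  fix n
  have "continuous_on UNIV (G n)" using assms(2) by (simp add: poly_elems_def)
  then show "bounded_by (sup_norm (G n)) (\<lambda>z k. G n ((\<phi> ^^ k) y) * z k)"
    by (intro bounded_by_mult norm_le_sup_norm[OF assms(1)])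
qed

lemma Pi_x_tilde_bounded_by:
  assumes "compact (UNIV :: 'a::topological_space set)" "G \<in> poly_elems"
  shows "bounded_by (coeff_norm G) (Pi_x \<phi> xt (tilde (G :: nat \<Rightarrow> 'a \<Rightarrow> complex)))"
proof -
  have "bounded_by (\<Sum>n\<in>supp (tilde G). sup_norm (G n)) (Pi_x \<phi> xt (tilde G))"
    unfolding Pi_x_def
  proof (rule rep_bounded_by)
    show "finite (supp (tilde G))" using assms(2) by (simp add: supp_tilde poly_elems_def)
    have b: "bij (\<lambda>n::int. n - 1)"
      by (rule bij_betw_byWitness[where f'="\<lambda>n. n + 1"]) auto
    show "bounded_by 1 (\<lambda>\<xi> (n::int). \<xi> (n - 1) :: complex)"
      by (rule bounded_by_isometry) (simp add: l2_reindex_bij[OF b])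
    fix n
    have "continuous_on UNIV (G n)" using assms(2) by (simp add: poly_elems_def)
    then show "bounded_by (sup_norm (G n)) (\<lambda>\<xi> k. tilde G n (tphi_pow \<phi> k xt) * \<xi> k)"
      unfolding tilde_def o_def by (intro bounded_by_mult norm_le_sup_norm[OF assms(1)])
  qed
  then show ?thesis by (simp only: supp_tilde coeff_norm_def)
qed

definition shift_from :: "int \<Rightarrow> (nat \<Rightarrow> complex) \<Rightarrow> int \<Rightarrow> complex" where
  "shift_from m z = (\<lambda>n. if m \<le> n then z (nat (n - m)) else 0)"

lemma shift_from_l2: "shift_from m z \<in> l2 \<longleftrightarrow> z \<in> l2"
  and l2norm_shift_from: "l2norm (shift_from m z) = l2norm z"
proof -
  have "i \<notin> range (\<lambda>k::nat. m + int k) \<Longrightarrow> shift_from m z i = 0" for i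
    by (auto simp: shift_from_def intro: rev_image_eqI[of "nat (i - m)"])
  moreover have "inj (\<lambda>k::nat. m + int k)" "shift_from m z (m + int k) = z k" for k
    by (simp_all add: inj_def shift_from_def)
  ultimately show "shift_from m z \<in> l2 \<longleftrightarrow> z \<in> l2" "l2norm (shift_from m z) = l2norm z"
    using l2_extend_by_zero[where e = "\<lambda>k. m + int k" and w = "shift_from m z" and z = z] by blast+
qed

lemma Pi_x_tilde_shift_from:
  assumes "xt \<in> Xt \<phi>"
  shows "Pi_x \<phi> xt (tilde G) (shift_from m z) = shift_from m (pi_y \<phi> (orbit_point \<phi> xt m) G z)"
proof
  fix n
  show "Pi_x \<phi> xt (tilde G) (shift_from m z) n = shift_from m (pi_y \<phi> (orbit_point \<phi> xt m) G z) n"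
  proof (cases "m \<le> n")
    case True
    define k where "k = nat (n - m)"
    have n: "n = m + int k" using True by (simp add: k_def)
    have summand: "G j (orbit_point \<phi> xt (n - int j)) * shift_from m z (n - int j)
        = (if j \<le> k then G j ((\<phi> ^^ (k - j)) (orbit_point \<phi> xt m)) * z (k - j) else 0)" for j
    proof (cases "j \<le> k")
      case True
      then have "orbit_point \<phi> xt (n - int j) = (\<phi> ^^ (k - j)) (orbit_point \<phi> xt m)"
        using orbit_point_add[OF assms, of m "k - j"] n by (simp add: of_nat_diff add_diff_eq)
      moreover have "shift_from m z (n - int j) = z (k - j)"
        using n True by (simp add: shift_from_def nat_diff_distrib)
      ultimately show ?thesis using True by simp
    qed (use n in \<open>simp add: shift_from_def\<close>)
    have "Pi_x \<phi> xt (tilde G) (shift_from m z) n = pi_y \<phi> (orbit_point \<phi> xt m) G z k"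
      unfolding Pi_x_tilde_apply pi_y_apply summand ..
    also have "\<dots> = shift_from m (pi_y \<phi> (orbit_point \<phi> xt m) G z) n"
      using True by (simp add: shift_from_def k_def)
    finally show ?thesis .
  qed (simp add: Pi_x_tilde_apply shift_from_def)
qed

section \<open>The norm of \<open>\<Pi>\<^sub>x\<^sub>~(F\<^sup>~)\<close> for polynomial \<open>F\<close>\<close>

lemma opnorm_pi_y_le_opnorm_Pi_x_tilde:
  assumes cpt: "compact (UNIV :: 'a::topological_space set)" and G: "G \<in> poly_elems"
    and xt: "xt \<in> Xt \<phi>"
  shows "opnorm (pi_y \<phi> (orbit_point \<phi> xt m) (G :: nat \<Rightarrow> 'a \<Rightarrow> complex))
      \<le> opnorm (Pi_x \<phi> xt (tilde G))"
proof (rule opnorm_least)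
  fix z :: "nat \<Rightarrow> complex" assume z: "z \<in> l2" "l2norm z \<le> 1"
  have "l2norm (pi_y \<phi> (orbit_point \<phi> xt m) G z) = l2norm (Pi_x \<phi> xt (tilde G) (shift_from m z))"
    by (simp add: Pi_x_tilde_shift_from[OF xt] l2norm_shift_from)
  also have "\<dots> \<le> opnorm (Pi_x \<phi> xt (tilde G))"
    by (rule l2norm_le_opnorm[OF Pi_x_tilde_bounded_by[OF cpt G]])
      (simp_all add: shift_from_l2 l2norm_shift_from z)
  finally show "l2norm (pi_y \<phi> (orbit_point \<phi> xt m) G z) \<le> opnorm (Pi_x \<phi> xt (tilde G))" .
qed

lemma l2_lower_tail_small:
  fixes \<xi> :: "int \<Rightarrow> complex"
  assumes "\<xi> \<in> l2" "\<delta> > 0"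
  obtains m where "infsum (\<lambda>n. (cmod (\<xi> n))^2) {..<m} \<le> \<delta>"
proof -
  let ?f = "\<lambda>n. (cmod (\<xi> n))^2"
  have s: "?f summable_on UNIV" using assms(1) by (simp add: l2_def)
  obtain F where F: "finite F" "dist (sum ?f F) (infsum ?f UNIV) \<le> \<delta>"
    using infsum_finite_approximation[OF s assms(2)] by blast
  define m where "m = Min (insert 0 F)"
  have s1: "?f summable_on {..<m}" "?f summable_on (- {..<m})"
    by (rule summable_on_subset_banach[OF s], simp)+
  have "infsum ?f UNIV = infsum ?f ({..<m} \<union> - {..<m})"
    by (metis Compl_partition)
  also have "\<dots> = infsum ?f {..<m} + infsum ?f (- {..<m})"
    by (rule infsum_Un_disjoint[OF s1]) auto
  finally have split: "infsum ?f UNIV = infsum ?f {..<m} + infsum ?f (- {..<m})" .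
  have "sum ?f F \<le> infsum ?f (- {..<m})"
    by (rule finite_sum_le_infsum[OF s1(2) F(1)]) (use F(1) in \<open>auto simp: m_def not_less\<close>)
  then have "infsum ?f {..<m} \<le> \<delta>" using F(2) unfolding split dist_real_def by linarith
  then show ?thesis by (rule that)
qed

lemma l2_split_half_line:
  fixes \<xi> :: "int \<Rightarrow> complex"
  assumes \<xi>: "\<xi> \<in> l2" and \<epsilon>: "\<epsilon> > 0"
  obtains m z r where "\<xi> = (\<lambda>n. shift_from m z n + r n)" "z \<in> l2" "l2norm z \<le> l2norm \<xi>"
    "r \<in> l2" "l2norm r \<le> \<epsilon>"
proof -
  obtain m where m: "infsum (\<lambda>n. (cmod (\<xi> n))^2) {..<m} \<le> \<epsilon>^2"
    using l2_lower_tail_small[OF \<xi>] \<epsilon> by (metis zero_less_power)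
  define z where "z = (\<lambda>k::nat. \<xi> (m + int k))"
  define r where "r = (\<lambda>n. if m \<le> n then 0 else \<xi> n)"
  have shift: "shift_from m z = (\<lambda>n. if m \<le> n then \<xi> n else 0)"
    by (auto simp: shift_from_def z_def)
  have "\<xi> = (\<lambda>n. shift_from m z n + r n)" unfolding shift r_def by auto
  moreover have "shift_from m z \<in> l2" "l2norm (shift_from m z) \<le> l2norm \<xi>"
    unfolding shift by (rule l2_mono[OF \<xi>]; simp)+
  moreover have "r \<in> l2" unfolding r_def by (rule l2_mono[OF \<xi>]) simp
  moreover have "(\<Sum>\<^sub>\<infinity>n. (cmod (r n))^2) = infsum (\<lambda>n. (cmod (\<xi> n))^2) {..<m}"
    by (rule infsum_cong_neutral) (auto simp: r_def)
  then have "l2norm r \<le> \<epsilon>" using m \<epsilon> by (intro l2norm_leI) simp_all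
  ultimately show ?thesis using that by (simp add: shift_from_l2 l2norm_shift_from)
qed

lemma Pi_x_tilde_add:
  "Pi_x \<phi> xt (tilde G) (\<lambda>n. u n + v n) = (\<lambda>n. Pi_x \<phi> xt (tilde G) u n + Pi_x \<phi> xt (tilde G) v n)"
  by (rule ext) (simp add: Pi_x_tilde_apply distrib_left sum.distrib)

lemma opnorm_Pi_x_tilde_le_SUP:
  assumes cpt: "compact (UNIV :: 'a::topological_space set)" and G: "G \<in> poly_elems"
    and xt: "xt \<in> Xt \<phi>"
  shows "opnorm (Pi_x \<phi> xt (tilde (G :: nat \<Rightarrow> 'a \<Rightarrow> complex)))
      \<le> (SUP m. opnorm (pi_y \<phi> (orbit_point \<phi> xt m) G))"
proof (rule opnorm_least)
  let ?P = "Pi_x \<phi> xt (tilde G)" and ?p = "\<lambda>m. pi_y \<phi> (orbit_point \<phi> xt m) G"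
  let ?C = "coeff_norm G"
  note P = Pi_x_tilde_bounded_by[OF cpt G, of \<phi> xt] and p = pi_y_bounded_by[OF cpt G, of \<phi>]
  have C: "0 \<le> ?C" using P by (simp add: bounded_by_def)
  have bdd: "bdd_above (range (\<lambda>m. opnorm (?p m)))"
    using opnorm_le_bound[OF p] by (intro bdd_aboveI[of _ ?C]) auto
  fix \<xi> :: "int \<Rightarrow> complex" assume \<xi>: "\<xi> \<in> l2" "l2norm \<xi> \<le> 1"
  show "l2norm (?P \<xi>) \<le> (SUP m. opnorm (?p m))"
  proof (rule field_le_epsilon)
    fix \<epsilon> :: real assume "0 < \<epsilon>"
    then have "0 < \<epsilon> / (?C + 1)" using C by simp
    then obtain m z r where dec: "\<xi> = (\<lambda>n. shift_from m z n + r n)"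
      and z: "z \<in> l2" "l2norm z \<le> l2norm \<xi>" and r: "r \<in> l2" "l2norm r \<le> \<epsilon> / (?C + 1)"
      by (rule l2_split_half_line[OF \<xi>(1)])
    have z1: "l2norm z \<le> 1" using z(2) \<xi>(2) by linarith
    have "l2norm (?P \<xi>) \<le> l2norm (?P (shift_from m z)) + l2norm (?P r)"
      by (subst dec, unfold Pi_x_tilde_add)
        (intro l2_add bounded_byD(1)[OF P] r(1), simp add: shift_from_l2 z)
    also have "l2norm (?P (shift_from m z)) = l2norm (?p m z)"
      by (simp add: Pi_x_tilde_shift_from[OF xt] l2norm_shift_from)
    also have "\<dots> \<le> opnorm (?p m)" by (rule l2norm_le_opnorm[OF p z(1) z1])
    also have "\<dots> \<le> (SUP m. opnorm (?p m))" by (rule cSUP_upper[OF UNIV_I bdd])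
    also have "l2norm (?P r) \<le> ?C * (\<epsilon> / (?C + 1))"
      using bounded_byD(2)[OF P r(1)] mult_left_mono[OF r(2) C] by linarith
    also have "\<dots> \<le> \<epsilon>" using C \<open>0 < \<epsilon>\<close> by (simp add: field_simps)
    finally show "l2norm (?P \<xi>) \<le> (SUP m. opnorm (?p m)) + \<epsilon>" by simp
  qed
qed

theorem opnorm_Pi_x_tilde:
  assumes "compact (UNIV :: 'a::topological_space set)" "G \<in> poly_elems" "xt \<in> Xt \<phi>"
  shows "opnorm (Pi_x \<phi> xt (tilde (G :: nat \<Rightarrow> 'a \<Rightarrow> complex)))
      = (SUP y \<in> pext ` orbit \<phi> xt. opnorm (pi_y \<phi> y G))"
proof -
  have "(SUP m. opnorm (pi_y \<phi> (orbit_point \<phi> xt m) G)) \<le> opnorm (Pi_x \<phi> xt (tilde G))"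
    by (rule cSUP_least) (simp_all add: opnorm_pi_y_le_opnorm_Pi_x_tilde[OF assms])
  then show ?thesis
    using opnorm_Pi_x_tilde_le_SUP[OF assms] by (simp add: pext_orbit image_image)
qed

section \<open>Comparison with the universal norm\<close>

lemma bounded_op_mult:
  fixes b :: "'i \<Rightarrow> complex"
  assumes "\<And>i. cmod (b i) \<le> B"
  shows "bounded_op (\<lambda>\<eta> i. b i * \<eta> i)"
  unfolding bounded_op_def
proof (intro conjI ballI allI)
  show "(\<lambda>i. b i * \<xi> i) \<in> l2" if "\<xi> \<in> l2" for \<xi>
    using l2_mult_bounded(1)[OF that assms] .
  show "\<exists>C. \<forall>\<xi>\<in>l2. l2norm (\<lambda>i. b i * \<xi> i) \<le> C * l2norm \<xi>"
    using l2_mult_bounded(2) assms by blast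
qed (auto simp: algebra_simps)

lemma bounded_op_reindex:
  fixes \<sigma> :: "'i \<Rightarrow> 'i"
  assumes "bij \<sigma>"
  shows "bounded_op (\<lambda>\<eta> i. \<eta> (\<sigma> i))"
  unfolding bounded_op_def
proof (intro conjI ballI allI)
  show "(\<lambda>i. \<xi> (\<sigma> i)) \<in> l2" if "\<xi> \<in> l2" for \<xi> :: "'i \<Rightarrow> complex"
    using l2_reindex_bij(1)[OF assms that] .
  show "\<exists>C. \<forall>\<xi>\<in>l2. l2norm (\<lambda>i. \<xi> (\<sigma> i)) \<le> C * l2norm \<xi>"
    by (rule exI[of _ 1]) (simp add: l2_reindex_bij(2)[OF assms])
qed auto

text \<open>The universal norm only sees representations on \<open>\<ell>\<^sup>2(nat \<Rightarrow> 'a \<Rightarrow> complex)\<close>;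
  \<open>\<ell>\<^sup>2(\<int>)\<close> is placed inside it along the constant functions \<open>of_int n\<close>.\<close>
definition int_index :: "int \<Rightarrow> (nat \<Rightarrow> 'a \<Rightarrow> complex)" where
  "int_index n = (\<lambda>_ _. of_int n)"

lemma inj_int_index: "inj int_index"
proof (rule injI)
  fix n m :: int assume "int_index n = (int_index m :: nat \<Rightarrow> 'a \<Rightarrow> complex)"
  then have "(of_int n :: complex) = of_int m" unfolding int_index_def by meson
  then show "n = m" by simp
qed

definition index_shift :: "(nat \<Rightarrow> 'a \<Rightarrow> complex) \<Rightarrow> (nat \<Rightarrow> 'a \<Rightarrow> complex)" where
  "index_shift i = (if i \<in> range int_index then int_index (inv int_index i - 1) else i)"

lemma index_shift_int_index [simp]: "index_shift (int_index n) = int_index (n - 1)"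
  by (simp add: index_shift_def inv_f_f[OF inj_int_index])

lemma bij_index_shift: "bij index_shift"
  by (rule bij_betw_byWitness[where f' = "\<lambda>i. if i \<in> range int_index then int_index (inv int_index i + 1) else i"])
    (auto simp: index_shift_def inv_f_f[OF inj_int_index])

lemma funpow_index_shift:
  "(index_shift ^^ j) i = (if i \<in> range int_index then int_index (inv int_index i - int j) else i)"
  by (induction j) (auto simp: index_shift_def inv_f_f[OF inj_int_index] algebra_simps)

definition orbit_mult :: "('a \<Rightarrow> 'a) \<Rightarrow> (nat \<Rightarrow> 'a) \<Rightarrow> ('a \<Rightarrow> complex)
    \<Rightarrow> ((nat \<Rightarrow> 'a \<Rightarrow> complex) \<Rightarrow> complex) \<Rightarrow> ((nat \<Rightarrow> 'a \<Rightarrow> complex) \<Rightarrow> complex)" where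
  "orbit_mult \<phi> xt f \<eta> =
    (\<lambda>i. (if i \<in> range int_index then f (orbit_point \<phi> xt (inv int_index i)) else 0) * \<eta> i)"

definition index_shift_op :: "((nat \<Rightarrow> 'a \<Rightarrow> complex) \<Rightarrow> complex) \<Rightarrow> ((nat \<Rightarrow> 'a \<Rightarrow> complex) \<Rightarrow> complex)" where
  "index_shift_op \<eta> = (\<lambda>i. \<eta> (index_shift i))"

definition embed_int :: "(int \<Rightarrow> complex) \<Rightarrow> ((nat \<Rightarrow> 'a \<Rightarrow> complex) \<Rightarrow> complex)" where
  "embed_int \<xi> = (\<lambda>i. if i \<in> range int_index then \<xi> (inv int_index i) else 0)"

lemma embed_int_l2: "embed_int \<xi> \<in> l2 \<longleftrightarrow> \<xi> \<in> l2"
  and l2norm_embed_int: "l2norm (embed_int \<xi>) = l2norm \<xi>"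
proof -
  have "embed_int \<xi> (int_index n) = \<xi> n" for n
    by (simp add: embed_int_def inv_f_f[OF inj_int_index])
  moreover have "i \<notin> range int_index \<Longrightarrow> embed_int \<xi> i = 0" for i
    by (simp add: embed_int_def)
  ultimately show "embed_int \<xi> \<in> l2 \<longleftrightarrow> \<xi> \<in> l2" "l2norm (embed_int \<xi>) = l2norm \<xi>"
    using l2_extend_by_zero[OF inj_int_index] by blast+
qed

lemma cov_rep_orbit_mult:
  assumes cpt: "compact (UNIV :: 'a::topological_space set)" and xt: "xt \<in> Xt \<phi>"
  shows "cov_rep \<phi> (orbit_mult \<phi> xt :: ('a \<Rightarrow> complex) \<Rightarrow> _) index_shift_op"
  unfolding cov_rep_def
proof (intro conjI)
  show "star_rep (orbit_mult \<phi> xt :: ('a \<Rightarrow> complex) \<Rightarrow> _)"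
    unfolding star_rep_def
  proof (intro conjI allI impI ballI)
    fix f :: "'a \<Rightarrow> complex" assume f: "continuous_on UNIV f"
    show "bounded_op (orbit_mult \<phi> xt f)"
      unfolding orbit_mult_def
      by (rule bounded_op_mult[where B = "sup_norm f"])
        (simp add: norm_le_sup_norm[OF cpt f] order_trans[OF norm_ge_zero norm_le_sup_norm[OF cpt f]])
  next
    fix f :: "'a \<Rightarrow> complex" and \<xi> \<eta>
    have "orbit_mult \<phi> xt f \<xi> i * cnj (\<eta> i) = \<xi> i * cnj (orbit_mult \<phi> xt (\<lambda>x. cnj (f x)) \<eta> i)" for i
      by (simp add: orbit_mult_def)
    then show "l2inner (orbit_mult \<phi> xt f \<xi>) \<eta> = l2inner \<xi> (orbit_mult \<phi> xt (\<lambda>x. cnj (f x)) \<eta>)"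
      unfolding l2inner_def by simp
  qed (auto simp: orbit_mult_def algebra_simps)
  show "bounded_op index_shift_op"
    unfolding index_shift_op_def by (rule bounded_op_reindex[OF bij_index_shift])
  show "\<forall>\<xi>\<in>l2. l2norm (index_shift_op \<xi>) = l2norm \<xi>"
    unfolding index_shift_op_def using l2_reindex_bij(2)[OF bij_index_shift] by blast
  show "\<forall>f. continuous_on UNIV f \<longrightarrow> (\<forall>\<xi>\<in>l2.
      orbit_mult \<phi> xt f (index_shift_op \<xi>) = index_shift_op (orbit_mult \<phi> xt (f \<circ> \<phi>) \<xi>))"
  proof (intro allI impI ballI ext)
    fix f :: "'a \<Rightarrow> complex" and \<xi> and i :: "nat \<Rightarrow> 'a \<Rightarrow> complex"
    show "orbit_mult \<phi> xt f (index_shift_op \<xi>) i = index_shift_op (orbit_mult \<phi> xt (f \<circ> \<phi>) \<xi>) i"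
    proof (cases "i \<in> range int_index")
      case True
      then obtain n where n: "i = int_index n" by blast
      have "orbit_point \<phi> xt n = \<phi> (orbit_point \<phi> xt (n - 1))"
        using orbit_point_succ[OF xt, of "n - 1"] by simp
      then show ?thesis
        unfolding n by (simp add: orbit_mult_def index_shift_op_def inv_f_f[OF inj_int_index])
    qed (simp add: orbit_mult_def index_shift_op_def index_shift_def)
  qed
qed

lemma rep_orbit_mult_embed_int:
  "rep (orbit_mult \<phi> xt) index_shift_op D (embed_int \<xi>) = embed_int (Pi_x \<phi> xt (tilde D) \<xi>)"
proof -
  have "(index_shift_op ^^ j) \<eta> = (\<lambda>i. \<eta> ((index_shift ^^ j) i))" for j and \<eta> :: "(nat \<Rightarrow> 'a \<Rightarrow> complex) \<Rightarrow> complex"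
    by (induction j) (simp_all add: index_shift_op_def funpow_swap1)
  then show ?thesis
    by (auto simp: rep_def funpow_index_shift orbit_mult_def embed_int_def Pi_x_tilde_apply
        inv_f_f[OF inj_int_index])
qed

lemma opnorm_Pi_x_tilde_le_univ_norm:
  assumes cpt: "compact (UNIV :: 'a::topological_space set)" and D: "D \<in> poly_elems"
    and xt: "xt \<in> Xt \<phi>"
  shows "opnorm (Pi_x \<phi> xt (tilde (D :: nat \<Rightarrow> 'a \<Rightarrow> complex))) \<le> univ_norm \<phi> D"
proof -
  let ?R = "rep (orbit_mult \<phi> xt :: ('a \<Rightarrow> complex) \<Rightarrow> _) index_shift_op D"
  note cr = cov_rep_orbit_mult[OF cpt xt]
  have "opnorm (Pi_x \<phi> xt (tilde D)) \<le> opnorm ?R"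
  proof (rule opnorm_least)
    fix \<xi> :: "int \<Rightarrow> complex" assume \<xi>: "\<xi> \<in> l2" "l2norm \<xi> \<le> 1"
    have "l2norm (Pi_x \<phi> xt (tilde D) \<xi>) = l2norm (?R (embed_int \<xi>))"
      by (simp add: rep_orbit_mult_embed_int l2norm_embed_int)
    also have "\<dots> \<le> opnorm ?R"
      by (rule l2norm_le_opnorm[OF cov_rep_bounded_by[OF cpt cr D]])
        (simp_all add: embed_int_l2 l2norm_embed_int \<xi>)
    finally show "l2norm (Pi_x \<phi> xt (tilde D) \<xi>) \<le> opnorm ?R" .
  qed
  also have "\<dots> \<le> univ_norm \<phi> D" by (rule opnorm_rep_le_univ_norm[OF cpt cr D])
  finally show ?thesis .
qed

section \<open>Passing to the limit\<close>

lemma tendsto_SUP_uniform_limit: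
  fixes h :: "nat \<Rightarrow> 'b \<Rightarrow> real"
  assumes lim: "uniform_limit S h H sequentially" and "S \<noteq> {}"
    and bdd: "\<And>k. bdd_above (h k ` S)"
  shows "(\<lambda>k. SUP x\<in>S. h k x) \<longlonglongrightarrow> (SUP x\<in>S. H x)"
proof (rule tendstoI)
  fix e :: real assume "0 < e"
  then have ev: "\<forall>\<^sub>F k in sequentially. \<forall>x\<in>S. dist (h k x) (H x) < e / 2"
    by (intro uniform_limitD[OF lim]) simp
  then obtain k0 where k0: "\<forall>x\<in>S. dist (h k0 x) (H x) < e / 2"
    using eventually_sequentially by auto
  have bddH: "bdd_above (H ` S)"
  proof (rule bdd_aboveI2)
    fix x assume x: "x \<in> S"
    have "H x \<le> h k0 x + e / 2"
      using k0[rule_format, OF x] unfolding dist_real_def abs_less_iff by auto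
    moreover have "h k0 x \<le> (SUP x\<in>S. h k0 x)" by (rule cSUP_upper[OF x bdd])
    ultimately show "H x \<le> (SUP x\<in>S. h k0 x) + e / 2" by linarith
  qed
  show "\<forall>\<^sub>F k in sequentially. dist (SUP x\<in>S. h k x) (SUP x\<in>S. H x) < e"
  proof (rule eventually_mono[OF ev])
    fix k assume k: "\<forall>x\<in>S. dist (h k x) (H x) < e / 2"
    have close: "h k x < H x + e / 2" "H x < h k x + e / 2" if "x \<in> S" for x
      using k[rule_format, OF that] unfolding dist_real_def abs_less_iff by auto
    have "(SUP x\<in>S. h k x) \<le> (SUP x\<in>S. H x) + e / 2"
      using close(1) cSUP_upper[OF _ bddH] by (intro cSUP_least[OF \<open>S \<noteq> {}\<close>]) fastforce
    moreover have "(SUP x\<in>S. H x) \<le> (SUP x\<in>S. h k x) + e / 2"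
      using close(2) cSUP_upper[OF _ bdd[of k]] by (intro cSUP_least[OF \<open>S \<noteq> {}\<close>]) fastforce
    ultimately show "dist (SUP x\<in>S. h k x) (SUP x\<in>S. H x) < e"
      using \<open>0 < e\<close> by (simp add: dist_real_def)
  qed
qed

lemma poly_elems_diff:
  "F \<in> poly_elems \<Longrightarrow> G \<in> poly_elems \<Longrightarrow> (\<lambda>j x. F j x - G j x) \<in> poly_elems"
proof -
  assume F: "F \<in> poly_elems" and G: "G \<in> poly_elems"
  have "supp (\<lambda>j x. F j x - G j x) \<subseteq> supp F \<union> supp G" by auto
  with F G show ?thesis
    by (auto simp: poly_elems_def intro: finite_subset intro!: continuous_intros)
qed

lemma pi_y_diff:
  assumes "F \<in> poly_elems" "G \<in> poly_elems"
  shows "pi_y \<phi> y F z = (\<lambda>k. pi_y \<phi> y G z k + pi_y \<phi> y (\<lambda>j x. F j x - G j x) z k)"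
proof
  fix k
  let ?T = "supp F \<union> supp G"
  have T: "finite ?T" using assms by (simp add: poly_elems_def)
  have on_T: "pi_y \<phi> y H z k = (\<Sum>j\<in>?T. if j \<le> k then H j ((\<phi> ^^ (k - j)) y) * z (k - j) else 0)"
    if "supp H \<subseteq> ?T" for H
    unfolding pi_y_apply by (rule sum.mono_neutral_left[OF T that]) auto
  have D: "supp (\<lambda>j x. F j x - G j x) \<subseteq> ?T" by auto
  show "pi_y \<phi> y F z k = pi_y \<phi> y G z k + pi_y \<phi> y (\<lambda>j x. F j x - G j x) z k"
    unfolding on_T[OF Un_upper1] on_T[OF Un_upper2] on_T[OF D] sum.distrib[symmetric]
    by (auto simp: algebra_simps intro!: sum.cong)
qed

lemma opnorm_pi_y_le_univ_norm:
  assumes cpt: "compact (UNIV :: 'a::topological_space set)" and D: "D \<in> poly_elems"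
    and xt: "xt \<in> Xt \<phi>" and y: "y \<in> pext ` orbit \<phi> xt"
  shows "opnorm (pi_y \<phi> y (D :: nat \<Rightarrow> 'a \<Rightarrow> complex)) \<le> univ_norm \<phi> D"
proof -
  obtain m where "y = orbit_point \<phi> xt m" using y by (auto simp: pext_orbit)
  then have "opnorm (pi_y \<phi> y D) \<le> opnorm (Pi_x \<phi> xt (tilde D))"
    using opnorm_pi_y_le_opnorm_Pi_x_tilde[OF cpt D xt] by simp
  also have "\<dots> \<le> univ_norm \<phi> D" by (rule opnorm_Pi_x_tilde_le_univ_norm[OF cpt D xt])
  finally show ?thesis .
qed

lemma opnorm_pi_y_le_add_univ_norm:
  assumes cpt: "compact (UNIV :: 'a::topological_space set)" and F: "F \<in> poly_elems"
    and G: "G \<in> poly_elems" and xt: "xt \<in> Xt \<phi>" and y: "y \<in> pext ` orbit \<phi> xt"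
  shows "opnorm (pi_y \<phi> y (F :: nat \<Rightarrow> 'a \<Rightarrow> complex))
      \<le> opnorm (pi_y \<phi> y G) + univ_norm \<phi> (\<lambda>j x. F j x - G j x)"
proof -
  note D = poly_elems_diff[OF F G]
  have "opnorm (pi_y \<phi> y F) \<le> opnorm (pi_y \<phi> y G) + opnorm (pi_y \<phi> y (\<lambda>j x. F j x - G j x))"
    by (rule opnorm_add_le[OF pi_y_bounded_by[OF cpt G] pi_y_bounded_by[OF cpt D]])
      (rule pi_y_diff[OF F G])
  then show ?thesis using opnorm_pi_y_le_univ_norm[OF cpt D xt y] by linarith
qed

theorem corollary4:
  fixes \<phi> :: "'a::t2_space \<Rightarrow> 'a"
    and F :: "nat \<Rightarrow> nat \<Rightarrow> 'a \<Rightarrow> complex"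
    and xt :: "nat \<Rightarrow> 'a"
  assumes "compact (UNIV :: 'a set)"
    and "continuous_on UNIV \<phi>"
    and "surj \<phi>"
    and "\<forall>k. F k \<in> poly_elems"
    and "\<forall>e>0. \<exists>N. \<forall>m\<ge>N. \<forall>n\<ge>N. univ_norm \<phi> (\<lambda>j x. F m j x - F n j x) < e"
    and "xt \<in> Xt \<phi>"
  shows "(\<lambda>k. opnorm (Pi_x \<phi> xt (tilde (F k))))
           \<longlonglongrightarrow> (SUP y \<in> pext ` orbit \<phi> xt. lim (\<lambda>k. opnorm (pi_y \<phi> y (F k))))"
proof -
  note cpt = assms(1) and F = assms(4)[rule_format] and cauchy = assms(5) and xt = assms(6)
  let ?S = "pext ` orbit \<phi> xt" and ?h = "\<lambda>k y. opnorm (pi_y \<phi> y (F k))"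
  have "uniformly_Cauchy_on ?S ?h"
  proof (rule uniformly_Cauchy_onI)
    fix e :: real assume "0 < e"
    then obtain N where N: "\<forall>m\<ge>N. \<forall>n\<ge>N. univ_norm \<phi> (\<lambda>j x. F m j x - F n j x) < e"
      using cauchy by blast
    have "dist (?h m y) (?h n y) < e" if "y \<in> ?S" "m \<ge> N" "n \<ge> N" for y m n
    proof -
      have "univ_norm \<phi> (\<lambda>j x. F m j x - F n j x) < e" "univ_norm \<phi> (\<lambda>j x. F n j x - F m j x) < e"
        using N that(2,3) by blast+
      then show ?thesis
        using opnorm_pi_y_le_add_univ_norm[OF cpt F F xt \<open>y \<in> ?S\<close>, of m n]
          opnorm_pi_y_le_add_univ_norm[OF cpt F F xt \<open>y \<in> ?S\<close>, of n m]
        unfolding dist_real_def abs_less_iff by (intro conjI; linarith)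
    qed
    then show "\<exists>N. \<forall>y\<in>?S. \<forall>m\<ge>N. \<forall>n\<ge>N. dist (?h m y) (?h n y) < e" by blast
  qed
  then have "uniform_limit ?S ?h (\<lambda>y. lim (\<lambda>k. ?h k y)) sequentially"
    using Cauchy_uniformly_convergent uniformly_convergent_uniform_limit_iff by blast
  moreover have "?S \<noteq> {}" by (simp add: orbit_def)
  moreover have "bdd_above (?h k ` ?S)" for k
    using opnorm_le_bound[OF pi_y_bounded_by[OF cpt F]] by (intro bdd_aboveI2) blast
  ultimately have "(\<lambda>k. SUP y\<in>?S. ?h k y) \<longlonglongrightarrow> (SUP y\<in>?S. lim (\<lambda>k. ?h k y))"
    by (rule tendsto_SUP_uniform_limit)
  then show ?thesis by (simp add: opnorm_Pi_x_tilde[OF cpt F xt])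
qed

end
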